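(* Fix $k,s\in\mathbb{N}$ and let $\omega=\omega(n)\to\infty$ as $n\to\infty$. (i) If $\alpha=\alpha(n)$ is bounded away from $0$, then $\lim_{n\to\infty}P\bigl(|(D_{n,1}^{\alpha})^s+\cdots+(D_{n,n}^{\alpha})^s-\mu_{s,\alpha}n|<\omega\sqrt{n}\bigr)=1$. (ii) $\lim_{n\to\infty}P\bigl(|(D_{n,1}^{\infty})^s+\cdots+(D_{n,n}^{\infty})^s-\mu_{s,\infty}n|<\omega\sqrt{n}\bigr)=1$.
   Context: A $k$-out map on $[n]$ is a map $M:[n]\to[n]^k$; the in-degree of vertex $j$ is the total number of coordinates, over all vertices and all $k$ labels, of the images equal to $j$. For $\alpha\in(0,\infty)$ the random $k$-out map $M_{n,k}^{\alpha}$ has law $P(M_{n,k}^{\alpha}=M)=\prod_{j=1}^n \alpha^{\overline{d_j}}/(\alpha n)^{\overline{kn}}$, with $(d_1,\dots,d_n)$ the in-degree sequence of $M$ and $x^{\overline{y}}=x(x+1)\cdots(x+y-1)$; $M_{n,k}^{\infty}$ is the uniformly random $k$-out map on $[n]$. $(D_{n,1}^{\alpha},\dots,D_{n,n}^{\alpha})$ and $(D_{n,1}^{\infty},\dots,D_{n,n}^{\infty})$ are their in-degree sequences, and $\mu_{s,\alpha}=\mathbb{E}[(D_{n,j}^{\alpha})^s]$, $\mu_{s,\infty}=\mathbb{E}[(D_{n,j}^{\infty})^s]$ (independent of $j$). *)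

theory Defs
  imports "HOL-Probability.Probability"
begin

text \<open>Vertices of [n] are encoded as 0..n-1 and labels of a k-out map as 0..k-1.
A k-out map M : [n] -> [n]^k is encoded as an extensional function on
{0..<n} x {0..<k} (pair (i,l) = l-th coordinate of the image of vertex i).\<close>

definition kout_maps :: "nat \<Rightarrow> nat \<Rightarrow> (nat \<times> nat \<Rightarrow> nat) set" where
  "kout_maps n k = ({0..<n} \<times> {0..<k}) \<rightarrow>\<^sub>E {0..<n}"

definition indeg :: "nat \<Rightarrow> nat \<Rightarrow> (nat \<times> nat \<Rightarrow> nat) \<Rightarrow> nat \<Rightarrow> nat" where
  "indeg n k M j = card {p \<in> {0..<n} \<times> {0..<k}. M p = j}"

definition kout_weight :: "real \<Rightarrow> nat \<Rightarrow> nat \<Rightarrow> (nat \<times> nat \<Rightarrow> nat) \<Rightarrow> real" where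
  "kout_weight \<alpha> n k M =
     (\<Prod>j<n. pochhammer \<alpha> (indeg n k M j)) / pochhammer (\<alpha> * real n) (k * n)"

definition prob_alpha :: "real \<Rightarrow> nat \<Rightarrow> nat \<Rightarrow> ((nat \<times> nat \<Rightarrow> nat) \<Rightarrow> bool) \<Rightarrow> real" where
  "prob_alpha \<alpha> n k E = (\<Sum>M\<in>{M \<in> kout_maps n k. E M}. kout_weight \<alpha> n k M)"

text \<open>mu_{s,alpha} = E[(D^alpha_{n,j})^s], taken at vertex j = 1 (encoded 0).\<close>
definition mu_alpha :: "real \<Rightarrow> nat \<Rightarrow> nat \<Rightarrow> nat \<Rightarrow> real" where
  "mu_alpha \<alpha> n k s = (\<Sum>M\<in>kout_maps n k. kout_weight \<alpha> n k M * real (indeg n k M 0) ^ s)"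

definition unif_kout :: "nat \<Rightarrow> nat \<Rightarrow> (nat \<times> nat \<Rightarrow> nat) pmf" where
  "unif_kout n k = pmf_of_set (kout_maps n k)"

definition mu_inf :: "nat \<Rightarrow> nat \<Rightarrow> nat \<Rightarrow> real" where
  "mu_inf n k s = measure_pmf.expectation (unif_kout n k) (\<lambda>M. real (indeg n k M 0) ^ s)"

end

theory Submission
  imports Defs
begin

text \<open>Both models are Polya urns: the coordinates of the map are drawn one after another, and a
vertex that has already received \<open>d\<close> coordinates is drawn with weight \<open>\<alpha> + e d\<close>
(\<open>e = 1\<close> for \<open>M\<^sup>\<alpha>\<close>, \<open>\<alpha> = 1, e = 0\<close> for the uniform map). Writing \<open>D\<^sub>j\<^sup>s\<close> as the number of
\<open>s\<close>-words of coordinates all pointing to \<open>j\<close>, the sum \<open>X = \<Sum>\<^sub>j D\<^sub>j\<^sup>s\<close> becomes a sum of indicators.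
Indicators for distinct vertices are negatively correlated (the urn formula is supermultiplicative
in the denominator), and an indicator for \<open>u\<close> coordinates has probability \<open>O(n\<^sup>-\<^sup>u)\<close> when \<open>\<alpha>\<close> is
bounded away from 0. Counting pairs of words by the size of their union then gives
\<open>Var X = O(n)\<close>, and Chebyshev's inequality with deviation \<open>\<omega> \<surd>n\<close> concludes.\<close>

section \<open>Generalised rising factorials\<close>

definition gen_pochhammer :: "real \<Rightarrow> real \<Rightarrow> nat \<Rightarrow> real" where
  "gen_pochhammer x e d = (\<Prod>i<d. x + e * real i)"

lemma gen_pochhammer_0 [simp]: "gen_pochhammer x e 0 = 1"
  by (simp add: gen_pochhammer_def)

lemma gen_pochhammer_Suc: "gen_pochhammer x e (Suc d) = gen_pochhammer x e d * (x + e * real d)"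
  by (simp add: gen_pochhammer_def)

lemma gen_pochhammer_pos: "x > 0 \<Longrightarrow> e \<ge> 0 \<Longrightarrow> gen_pochhammer x e d > 0"
  unfolding gen_pochhammer_def by (intro prod_pos) (auto intro: add_pos_nonneg)

lemma gen_pochhammer_1: "gen_pochhammer x 1 d = pochhammer x d"
  by (simp add: gen_pochhammer_def pochhammer_prod atLeast0LessThan)

lemma gen_pochhammer_mult_le_add:
  assumes "x > 0" "e \<ge> 0"
  shows "gen_pochhammer x e a * gen_pochhammer x e b \<le> gen_pochhammer x e (a + b)"
proof (induction b)
  case 0
  then show ?case by simp
next
  case (Suc b)
  have "gen_pochhammer x e a * gen_pochhammer x e (Suc b)
      = (gen_pochhammer x e a * gen_pochhammer x e b) * (x + e * real b)"
    by (simp add: gen_pochhammer_Suc)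
  also have "\<dots> \<le> gen_pochhammer x e (a + b) * (x + e * real (a + b))"
    using Suc assms gen_pochhammer_pos[OF assms, THEN less_imp_le]
    by (intro mult_mono) (auto intro!: add_nonneg_nonneg mult_left_mono)
  finally show ?case by (simp add: gen_pochhammer_Suc)
qed

section \<open>Words and powers of sums\<close>

definition words :: "'a set \<Rightarrow> nat \<Rightarrow> 'a list set" where
  "words P m = {w. set w \<subseteq> P \<and> length w = m}"

lemma finite_words [simp]: "finite P \<Longrightarrow> finite (words P m)"
  unfolding words_def by (rule finite_lists_length_eq)

lemma words_0 [simp]: "words P 0 = {[]}"
  by (auto simp: words_def)

lemma card_set_le_of_words: "w \<in> words P m \<Longrightarrow> card (set w) \<le> m"
  unfolding words_def using card_length by blast

lemma sum_words_Suc: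
  assumes "finite P"
  shows "(\<Sum>w\<in>words P (Suc m). f w) = (\<Sum>x\<in>P. \<Sum>w\<in>words P m. f (x # w))"
proof -
  have "(\<Sum>w\<in>words P (Suc m). f w) = (\<Sum>(w, x)\<in>words P m \<times> P. f (x # w))"
    unfolding words_def lists_length_Suc_eq
    by (subst sum.reindex[OF inj_split_Cons]) (simp add: case_prod_unfold)
  also have "\<dots> = (\<Sum>w\<in>words P m. \<Sum>x\<in>P. f (x # w))"
    by (simp add: sum.cartesian_product)
  also have "\<dots> = (\<Sum>x\<in>P. \<Sum>w\<in>words P m. f (x # w))"
    by (rule sum.swap)
  finally show ?thesis .
qed

lemma power_sum_eq_sum_words:
  fixes f :: "'a \<Rightarrow> 'b::comm_semiring_1"
  assumes "finite P"
  shows "(\<Sum>p\<in>P. f p) ^ m = (\<Sum>w\<in>words P m. \<Prod>p\<leftarrow>w. f p)"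
proof (induction m)
  case 0
  then show ?case by simp
next
  case (Suc m)
  then show ?case
    by (simp add: sum_words_Suc[OF assms] sum_product sum.swap[of _ P])
qed

text \<open>The one-step estimate behind the counting of words: attaching a letter to \<open>T\<close> either
stays inside \<open>T\<close> or costs a factor \<open>r\<close>.\<close>

lemma sum_power_card_insert_le:
  assumes "finite P" "T \<subseteq> P" "r \<ge> 0" "real (card P) * r \<le> a"
  shows "(\<Sum>x\<in>P. r ^ card (insert x T)) \<le> (a + real (card T)) * r ^ card T"
proof -
  have finT: "finite T" using assms(1,2) finite_subset by blast
  have "(\<Sum>x\<in>P. r ^ card (insert x T))
      = (\<Sum>x\<in>P - T. r ^ card (insert x T)) + (\<Sum>x\<in>T. r ^ card (insert x T))"
    using assms(1,2) by (intro sum.subset_diff)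
  also have "(\<Sum>x\<in>T. r ^ card (insert x T)) = real (card T) * r ^ card T"
    by (simp add: insert_absorb)
  also have "(\<Sum>x\<in>P - T. r ^ card (insert x T)) = (\<Sum>x\<in>P - T. r * r ^ card T)"
    using finT by (intro sum.cong) auto
  also have "\<dots> \<le> (\<Sum>x\<in>P. r * r ^ card T)"
    using assms by (intro sum_mono2) auto
  also have "\<dots> \<le> a * r ^ card T"
    using assms(3,4) by (simp add: mult.assoc[symmetric] mult_right_mono)
  finally show ?thesis by (simp add: algebra_simps)
qed

lemma sum_words_power_card_le:
  assumes "finite P" "T \<subseteq> P" "r \<ge> 0" "real (card P) * r \<le> a"
  shows "(\<Sum>w\<in>words P m. r ^ card (set w \<union> T)) \<le> (a + real (card T) + real m) ^ m * r ^ card T"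
  using assms(2)
proof (induction m arbitrary: T)
  case 0
  then show ?case by simp
next
  case (Suc m)
  have a0: "a \<ge> 0" using assms(3,4) by (meson order.trans of_nat_0_le_iff zero_le_mult_iff)
  define C where "C = (a + real (card T) + 1 + real m) ^ m"
  have C0: "C \<ge> 0" using a0 by (simp add: C_def)
  have "(\<Sum>w\<in>words P (Suc m). r ^ card (set w \<union> T))
      = (\<Sum>x\<in>P. \<Sum>w\<in>words P m. r ^ card (set w \<union> insert x T))"
    by (simp add: sum_words_Suc[OF assms(1)])
  also have "\<dots> \<le> (\<Sum>x\<in>P. C * r ^ card (insert x T))"
  proof (intro sum_mono)
    fix x assume x: "x \<in> P"
    have "card (insert x T) \<le> card T + 1" by (simp add: card_insert_le_m1 card_insert_if)
    then have "(a + real (card (insert x T)) + real m) ^ m \<le> C"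
      unfolding C_def using a0 by (intro power_mono) auto
    then have "(a + real (card (insert x T)) + real m) ^ m * r ^ card (insert x T)
        \<le> C * r ^ card (insert x T)"
      using assms(3) by (intro mult_right_mono) auto
    then show "(\<Sum>w\<in>words P m. r ^ card (set w \<union> insert x T)) \<le> C * r ^ card (insert x T)"
      using Suc.IH[of "insert x T"] Suc.prems x by simp
  qed
  also have "\<dots> \<le> C * ((a + real (card T)) * r ^ card T)"
    unfolding sum_distrib_left[symmetric]
    using sum_power_card_insert_le[OF assms(1) Suc.prems assms(3,4)] C0 by (rule mult_left_mono)
  also have "\<dots> \<le> (a + real (card T) + real (Suc m)) ^ Suc m * r ^ card T"
    unfolding C_def power_Suc2 mult.assoc[symmetric] using a0 assms(3)
    by (intro mult_right_mono mult_mono) (auto simp: add.assoc)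
  finally show ?case .
qed

lemma sum_pairs_of_words_le:
  assumes "finite P" "r \<ge> 0" "real (card P) * r \<le> a"
  shows "(\<Sum>w\<in>words P s. \<Sum>w'\<in>words P s. r ^ card (set w \<union> set w')) \<le> (a + real (2 * s)) ^ (2 * s)"
proof -
  have a0: "a \<ge> 0" using assms(2,3) by (meson order.trans of_nat_0_le_iff zero_le_mult_iff)
  have inner: "(\<Sum>w'\<in>words P s. r ^ card (set w \<union> set w')) \<le> (a + real (2 * s)) ^ s * r ^ card (set w)"
    if w: "w \<in> words P s" for w
  proof -
    have "(\<Sum>w'\<in>words P s. r ^ card (set w \<union> set w'))
        = (\<Sum>w'\<in>words P s. r ^ card (set w' \<union> set w))"
      by (simp only: Un_commute[of "set w"])
    also have "\<dots> \<le> (a + real (card (set w)) + real s) ^ s * r ^ card (set w)"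
      using w assms by (intro sum_words_power_card_le) (auto simp: words_def)
    also have "\<dots> \<le> (a + real (2 * s)) ^ s * r ^ card (set w)"
      using card_set_le_of_words[OF w] a0 assms(2) by (intro mult_right_mono power_mono) auto
    finally show ?thesis .
  qed
  have outer: "(\<Sum>w\<in>words P s. r ^ card (set w)) \<le> (a + real (2 * s)) ^ s"
  proof -
    have "(\<Sum>w\<in>words P s. r ^ card (set w \<union> {})) \<le> (a + real s) ^ s"
      using sum_words_power_card_le[OF assms(1) _ assms(2,3), of "{}"] by simp
    also have "\<dots> \<le> (a + real (2 * s)) ^ s"
      using a0 by (intro power_mono) auto
    finally show ?thesis by simp
  qed
  have "(\<Sum>w\<in>words P s. \<Sum>w'\<in>words P s. r ^ card (set w \<union> set w'))
      \<le> (\<Sum>w\<in>words P s. (a + real (2 * s)) ^ s * r ^ card (set w))"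
    by (intro sum_mono inner)
  also have "\<dots> \<le> (a + real (2 * s)) ^ s * (a + real (2 * s)) ^ s"
    unfolding sum_distrib_left[symmetric] using outer a0 by (intro mult_left_mono) auto
  finally show ?thesis by (metis mult_2 power_add)
qed

lemma sum_pairs_same_first:
  fixes H :: "'b \<Rightarrow> 'b \<Rightarrow> real"
  assumes "finite J"
  shows "(\<Sum>i\<in>J \<times> W. \<Sum>i'\<in>J \<times> W. if fst i = fst i' then H (snd i) (snd i') else 0)
       = real (card J) * (\<Sum>w\<in>W. \<Sum>w'\<in>W. H w w')"
proof -
  have inner: "(\<Sum>j'\<in>J. \<Sum>w'\<in>W. if j = j' then H w w' else 0) = (\<Sum>w'\<in>W. H w w')"
    if "j \<in> J" for j w
    using that assms by (subst sum.swap) simp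
  have "(\<Sum>i\<in>J \<times> W. \<Sum>i'\<in>J \<times> W. if fst i = fst i' then H (snd i) (snd i') else 0)
      = (\<Sum>j\<in>J. \<Sum>w\<in>W. \<Sum>j'\<in>J. \<Sum>w'\<in>W. if j = j' then H w w' else 0)"
    by (simp only: sum.cartesian_product' fst_conv snd_conv)
  also have "\<dots> = (\<Sum>j\<in>J. \<Sum>w\<in>W. \<Sum>w'\<in>W. H w w')"
    by (simp add: inner)
  finally show ?thesis by simp
qed

section \<open>Weighted variance and Chebyshev's inequality\<close>

lemma weighted_variance_of_sum:
  fixes w :: "'a \<Rightarrow> real" and Y :: "'i \<Rightarrow> 'a \<Rightarrow> real"
  assumes S: "finite S" and w1: "(\<Sum>x\<in>S. w x) = 1"
  shows "(\<Sum>x\<in>S. w x * ((\<Sum>i\<in>I. Y i x) - (\<Sum>x\<in>S. w x * (\<Sum>i\<in>I. Y i x)))\<^sup>2)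
       = (\<Sum>i\<in>I. \<Sum>i'\<in>I. (\<Sum>x\<in>S. w x * (Y i x * Y i' x))
               - (\<Sum>x\<in>S. w x * Y i x) * (\<Sum>x\<in>S. w x * Y i' x))"
proof -
  define Z where "Z x = (\<Sum>i\<in>I. Y i x)" for x
  define \<mu> where "\<mu> = (\<Sum>x\<in>S. w x * Z x)"
  have "(\<Sum>x\<in>S. w x * (Z x - \<mu>)\<^sup>2) = (\<Sum>x\<in>S. w x * (Z x)\<^sup>2 - 2 * \<mu> * (w x * Z x) + \<mu>\<^sup>2 * w x)"
    by (intro sum.cong) (simp_all add: power2_eq_square algebra_simps)
  also have "\<dots> = (\<Sum>x\<in>S. w x * (Z x)\<^sup>2) - \<mu>\<^sup>2"
    by (simp add: sum.distrib sum_subtractf sum_distrib_left[symmetric] \<mu>_def w1 power2_eq_square)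
  also have "(\<Sum>x\<in>S. w x * (Z x)\<^sup>2) = (\<Sum>i\<in>I. \<Sum>i'\<in>I. \<Sum>x\<in>S. w x * (Y i x * Y i' x))"
  proof -
    have "(Z x)\<^sup>2 = (\<Sum>i\<in>I. \<Sum>i'\<in>I. Y i x * Y i' x)" for x
      unfolding Z_def power2_eq_square by (rule sum_product)
    then show ?thesis
      by (simp add: sum_distrib_left sum.swap[of _ S])
  qed
  also have "\<mu>\<^sup>2 = (\<Sum>i\<in>I. \<Sum>i'\<in>I. (\<Sum>x\<in>S. w x * Y i x) * (\<Sum>x\<in>S. w x * Y i' x))"
  proof -
    have "\<mu> = (\<Sum>i\<in>I. \<Sum>x\<in>S. w x * Y i x)"
      unfolding \<mu>_def Z_def by (simp add: sum_distrib_left sum.swap[of _ S])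
    then show ?thesis
      unfolding power2_eq_square by (simp add: sum_product)
  qed
  finally show ?thesis
    by (simp add: Z_def \<mu>_def sum_subtractf)
qed

lemma chebyshev_weighted_sum:
  fixes w Z :: "'a \<Rightarrow> real"
  assumes S: "finite S" and w: "\<And>x. x \<in> S \<Longrightarrow> w x \<ge> 0" and w1: "(\<Sum>x\<in>S. w x) = 1"
    and T: "T > 0"
  shows "1 - (\<Sum>x\<in>S. w x * (Z x - \<mu>)\<^sup>2) / T\<^sup>2 \<le> (\<Sum>x\<in>{x\<in>S. \<bar>Z x - \<mu>\<bar> < T}. w x)"
proof -
  let ?far = "{x\<in>S. \<not> \<bar>Z x - \<mu>\<bar> < T}"
  have split: "(\<Sum>x\<in>S. w x) = (\<Sum>x\<in>{x\<in>S. \<bar>Z x - \<mu>\<bar> < T}. w x) + (\<Sum>x\<in>?far. w x)"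
    using S by (subst sum.union_disjoint[symmetric]) (auto intro: sum.cong)
  have "(\<Sum>x\<in>?far. w x) \<le> (\<Sum>x\<in>?far. w x * (Z x - \<mu>)\<^sup>2 / T\<^sup>2)"
  proof (intro sum_mono)
    fix x assume x: "x \<in> ?far"
    then have "T\<^sup>2 \<le> (Z x - \<mu>)\<^sup>2"
      using T by (simp add: abs_le_square_iff[symmetric] not_less)
    then have "1 \<le> (Z x - \<mu>)\<^sup>2 / T\<^sup>2" using T by simp
    from mult_left_mono[OF this w] x show "w x \<le> w x * (Z x - \<mu>)\<^sup>2 / T\<^sup>2" by simp
  qed
  also have "\<dots> \<le> (\<Sum>x\<in>S. w x * (Z x - \<mu>)\<^sup>2 / T\<^sup>2)"
    using S w by (intro sum_mono2) auto
  finally show ?thesis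
    using split w1 by (simp add: sum_divide_distrib)
qed

section \<open>The Polya urn model of random \<open>k\<close>-out maps\<close>

definition kout_positions :: "nat \<Rightarrow> nat \<Rightarrow> (nat \<times> nat) set" where
  "kout_positions n k = {0..<n} \<times> {0..<k}"

lemma finite_kout_positions [simp]: "finite (kout_positions n k)"
  by (simp add: kout_positions_def)

lemma card_kout_positions: "card (kout_positions n k) = k * n"
  by (simp add: kout_positions_def card_cartesian_product)

lemma kout_maps_eq: "kout_maps n k = kout_positions n k \<rightarrow>\<^sub>E {0..<n}"
  by (simp add: kout_maps_def kout_positions_def)

lemma finite_kout_maps [simp]: "finite (kout_maps n k)"
  by (simp add: kout_maps_def finite_PiE)

lemma kout_maps_nonempty: "kout_maps n k \<noteq> {}"
  by (cases "n = 0") (auto simp: kout_maps_eq kout_positions_def PiE_eq_empty_iff)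

lemma card_kout_maps: "card (kout_maps n k) = n ^ (k * n)"
  by (simp add: kout_maps_eq card_PiE card_kout_positions)

lemma sum_pairs_of_kout_words_le:
  assumes "n > 0"
  shows "(\<Sum>w\<in>words (kout_positions n k) s. \<Sum>w'\<in>words (kout_positions n k) s.
            (1 / real n) ^ card (set w \<union> set w')) \<le> (real k + real (2 * s)) ^ (2 * s)"
proof -
  have "real (card (kout_positions n k)) * (1 / real n) \<le> real k"
    using assms by (simp add: card_kout_positions)
  from sum_pairs_of_words_le[OF finite_kout_positions _ this] show ?thesis
    by simp
qed

lemma kout_map_less: "M \<in> kout_maps n k \<Longrightarrow> p \<in> kout_positions n k \<Longrightarrow> M p < n"
  by (auto simp: kout_maps_eq)

lemma real_indeg_power:
  "real (indeg n k M j) ^ s = (\<Sum>w\<in>words (kout_positions n k) s. of_bool (\<forall>p\<in>set w. M p = j))"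
proof -
  have prod_of_bool: "(\<Prod>p\<leftarrow>w. of_bool (M p = j)) = (of_bool (\<forall>p\<in>set w. M p = j) :: real)" for w
    by (induction w) auto
  have "real (indeg n k M j) ^ s = (\<Sum>p\<in>kout_positions n k. of_bool (M p = j)) ^ s"
    by (simp add: indeg_def kout_positions_def sum_of_bool_eq Int_def)
  also have "\<dots> = (\<Sum>w\<in>words (kout_positions n k) s. of_bool (\<forall>p\<in>set w. M p = j))"
    by (simp only: power_sum_eq_sum_words[OF finite_kout_positions] prod_of_bool)
  finally show ?thesis .
qed

definition indeg_power_sum :: "nat \<Rightarrow> nat \<Rightarrow> nat \<Rightarrow> (nat \<times> nat \<Rightarrow> nat) \<Rightarrow> real" where
  "indeg_power_sum n k s M = (\<Sum>j<n. real (indeg n k M j) ^ s)"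

definition urn_weight :: "nat \<Rightarrow> nat \<Rightarrow> real \<Rightarrow> real \<Rightarrow> (nat \<times> nat \<Rightarrow> nat) \<Rightarrow> real" where
  "urn_weight n k \<alpha> e M =
     (\<Prod>j<n. gen_pochhammer \<alpha> e (indeg n k M j)) / gen_pochhammer (\<alpha> * real n) e (k * n)"

lemma kout_weight_eq_urn_weight: "kout_weight \<alpha> n k M = urn_weight n k \<alpha> 1 M"
  by (simp add: kout_weight_def urn_weight_def gen_pochhammer_1)

lemma urn_weight_uniform: "urn_weight n k 1 0 M = 1 / real (card (kout_maps n k))"
  by (simp add: urn_weight_def gen_pochhammer_def card_kout_maps)

definition urn_prefix_weight ::
    "nat \<Rightarrow> real \<Rightarrow> real \<Rightarrow> (nat \<times> nat) set \<Rightarrow> (nat \<times> nat \<Rightarrow> nat) \<Rightarrow> real" where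
  "urn_prefix_weight n \<alpha> e A g =
     (\<Prod>j<n. gen_pochhammer \<alpha> e (card {p\<in>A. g p = j})) / gen_pochhammer (\<alpha> * real n) e (card A)"

definition urn_hit :: "nat \<Rightarrow> real \<Rightarrow> real \<Rightarrow> nat \<Rightarrow> real" where
  "urn_hit n \<alpha> e u = gen_pochhammer \<alpha> e u / gen_pochhammer (\<alpha> * real n) e u"

definition urn_prob :: "nat \<Rightarrow> nat \<Rightarrow> real \<Rightarrow> real \<Rightarrow> ((nat \<times> nat \<Rightarrow> nat) \<Rightarrow> bool) \<Rightarrow> real" where
  "urn_prob n k \<alpha> e P = (\<Sum>M\<in>{M\<in>kout_maps n k. P M}. urn_weight n k \<alpha> e M)"

definition urn_expect :: "nat \<Rightarrow> nat \<Rightarrow> real \<Rightarrow> real \<Rightarrow> ((nat \<times> nat \<Rightarrow> nat) \<Rightarrow> real) \<Rightarrow> real" where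
  "urn_expect n k \<alpha> e X = (\<Sum>M\<in>kout_maps n k. urn_weight n k \<alpha> e M * X M)"

locale kout_urn =
  fixes n k :: nat and \<alpha> e :: real
  assumes n_pos: "n > 0" and \<alpha>_pos: "\<alpha> > 0" and e_nonneg: "e \<ge> 0"
begin

lemma gen_pochhammer_scaled_pos: "gen_pochhammer (\<alpha> * real n) e d > 0"
  using n_pos \<alpha>_pos e_nonneg by (intro gen_pochhammer_pos) auto

lemma urn_weight_nonneg: "urn_weight n k \<alpha> e M \<ge> 0"
  unfolding urn_weight_def
  using gen_pochhammer_pos[OF \<alpha>_pos e_nonneg] gen_pochhammer_scaled_pos
  by (intro divide_nonneg_pos prod_nonneg) (auto intro: less_imp_le)

lemma urn_hit_nonneg: "urn_hit n \<alpha> e u \<ge> 0"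
  unfolding urn_hit_def
  using gen_pochhammer_pos[OF \<alpha>_pos e_nonneg, of u] gen_pochhammer_scaled_pos[of u] by simp

lemma urn_prefix_weight_update:
  assumes fin: "finite A" and q: "q \<notin> A" and v: "v < n"
  shows "urn_prefix_weight n \<alpha> e (insert q A) (g(q := v))
       = urn_prefix_weight n \<alpha> e A g * (\<alpha> + e * real (card {p\<in>A. g p = v}))
           / (\<alpha> * real n + e * real (card A))"
proof -
  define d where "d j = card {p\<in>A. g p = j}" for j
  have card_fiber: "card {p\<in>insert q A. (g(q := v)) p = j} = d j + of_bool (j = v)" for j
  proof -
    have "{p\<in>insert q A. (g(q := v)) p = j}
        = (if v = j then insert q {p\<in>A. g p = j} else {p\<in>A. g p = j})"
      using q by auto
    then show ?thesis using q fin by (auto simp: d_def)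
  qed
  have "(\<Prod>j<n. gen_pochhammer \<alpha> e (card {p\<in>insert q A. (g(q := v)) p = j}))
      = (\<Prod>j<n. gen_pochhammer \<alpha> e (d j) * (if j = v then \<alpha> + e * real (d j) else 1))"
    unfolding card_fiber by (intro prod.cong) (simp_all add: gen_pochhammer_Suc)
  also have "\<dots> = (\<Prod>j<n. gen_pochhammer \<alpha> e (d j)) * (\<alpha> + e * real (d v))"
    using v by (simp add: prod.distrib)
  finally show ?thesis
    using fin q by (simp add: urn_prefix_weight_def gen_pochhammer_Suc d_def)
qed

text \<open>Drawing one more coordinate: the weights \<open>\<alpha> + e d\<^sub>v\<close> of the \<open>n\<close> possible values add up
to the new factor \<open>\<alpha> n + e |A|\<close> of the denominator.\<close>

lemma urn_prefix_weight_insert: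
  assumes fin: "finite A" and q: "q \<notin> A" and g: "\<forall>p\<in>A. g p < n"
  shows "(\<Sum>v<n. urn_prefix_weight n \<alpha> e (insert q A) (g(q := v))) = urn_prefix_weight n \<alpha> e A g"
proof -
  have "(\<Sum>v<n. card {p\<in>A. g p = v}) = card A"
    using fin g by (subst card_eq_sum, subst sum.group[symmetric]) auto
  then have "(\<Sum>v<n. \<alpha> + e * real (card {p\<in>A. g p = v})) = \<alpha> * real n + e * real (card A)"
    by (simp add: sum.distrib sum_distrib_left[symmetric] mult.commute flip: of_nat_sum)
  moreover have "\<alpha> * real n + e * real (card A) > 0"
    using n_pos \<alpha>_pos e_nonneg by (intro add_pos_nonneg) auto
  ultimately show ?thesis
    using fin q by (simp add: urn_prefix_weight_update sum_divide_distrib[symmetric]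
        sum_distrib_left[symmetric])
qed

lemma urn_weight_agree_everywhere:
  assumes "\<forall>p\<in>kout_positions n k. g p < n"
  shows "(\<Sum>M\<in>{M\<in>kout_maps n k. \<forall>p\<in>kout_positions n k. M p = g p}. urn_weight n k \<alpha> e M)
       = urn_prefix_weight n \<alpha> e (kout_positions n k) g"
proof -
  let ?Pos = "kout_positions n k"
  have maps: "{M\<in>kout_maps n k. \<forall>p\<in>?Pos. M p = g p} = {restrict g ?Pos}"
  proof (intro equalityI subsetI)
    fix M assume M: "M \<in> {M\<in>kout_maps n k. \<forall>p\<in>?Pos. M p = g p}"
    then have "M \<in> ?Pos \<rightarrow>\<^sub>E {0..<n}" by (simp add: kout_maps_eq)
    then have "M = restrict M ?Pos" by (simp add: PiE_restrict)
    also have "\<dots> = restrict g ?Pos" using M by (intro restrict_ext) auto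
    finally show "M \<in> {restrict g ?Pos}" by simp
  qed (use assms in \<open>auto simp: kout_maps_eq restrict_PiE_iff\<close>)
  have "indeg n k (restrict g ?Pos) j = card {p\<in>?Pos. g p = j}" for j
    unfolding indeg_def kout_positions_def by (intro arg_cong[where f = card]) auto
  then have weight: "urn_weight n k \<alpha> e (restrict g ?Pos) = urn_prefix_weight n \<alpha> e (?Pos) g"
    unfolding urn_weight_def urn_prefix_weight_def card_kout_positions by simp
  show ?thesis
    by (simp only: maps weight sum.insert finite.emptyI empty_iff not_False_eq_True
        sum.empty add_0_right)
qed

lemma urn_weight_marginal:
  assumes A: "A \<subseteq> kout_positions n k" and g: "\<forall>p\<in>A. g p < n"
  shows "(\<Sum>M\<in>{M\<in>kout_maps n k. \<forall>p\<in>A. M p = g p}. urn_weight n k \<alpha> e M)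
       = urn_prefix_weight n \<alpha> e A g"
proof -
  let ?Pos = "kout_positions n k"
  have "(\<Sum>M\<in>{M\<in>kout_maps n k. \<forall>p\<in>?Pos - B. M p = g p}. urn_weight n k \<alpha> e M)
      = urn_prefix_weight n \<alpha> e (?Pos - B) g"
    if "finite B" "B \<subseteq> ?Pos" "\<forall>p\<in>?Pos - B. g p < n" for B g
    using that
  proof (induction B arbitrary: g rule: finite_subset_induct)
    case empty
    then show ?case by (simp add: urn_weight_agree_everywhere)
  next
    case (insert q B)
    define A where "A = ?Pos - insert q B"
    have qA: "q \<notin> A" and insA: "insert q A = ?Pos - B"
      using insert.hyps by (auto simp: A_def)
    let ?S = "{M\<in>kout_maps n k. \<forall>p\<in>A. M p = g p}"
    have "(\<Sum>M\<in>?S. urn_weight n k \<alpha> e M)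
        = (\<Sum>v<n. \<Sum>M\<in>{M\<in>?S. M q = v}. urn_weight n k \<alpha> e M)"
      using insert.hyps by (intro sum.group[symmetric]) (auto simp: kout_map_less)
    also have "\<dots> = (\<Sum>v<n. urn_prefix_weight n \<alpha> e (insert q A) (g(q := v)))"
    proof (intro sum.cong refl)
      fix v assume "v \<in> {..<n}"
      moreover have "{M\<in>?S. M q = v} = {M\<in>kout_maps n k. \<forall>p\<in>?Pos - B. M p = (g(q := v)) p}"
        using qA insA by auto
      ultimately show "(\<Sum>M\<in>{M\<in>?S. M q = v}. urn_weight n k \<alpha> e M)
          = urn_prefix_weight n \<alpha> e (insert q A) (g(q := v))"
        using insert.IH[of "g(q := v)"] insert.prems insA by (auto simp: A_def fun_upd_def)
    qed
    also have "\<dots> = urn_prefix_weight n \<alpha> e A g"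
      using insert.prems by (intro urn_prefix_weight_insert qA) (auto simp: A_def)
    finally show ?case by (simp add: A_def)
  qed
  from this[of "?Pos - A" g] A g show ?thesis
    by (simp add: Diff_Diff_Int Int_absorb1)
qed

lemma sum_urn_weight: "(\<Sum>M\<in>kout_maps n k. urn_weight n k \<alpha> e M) = 1"
  using urn_weight_marginal[of "{}"] by (simp add: urn_prefix_weight_def)

lemma urn_prob_le_1: "urn_prob n k \<alpha> e P \<le> 1"
  unfolding urn_prob_def sum_urn_weight[symmetric]
  using urn_weight_nonneg by (intro sum_mono2) auto

lemma urn_expect_of_bool: "urn_expect n k \<alpha> e (\<lambda>M. of_bool (P M)) = urn_prob n k \<alpha> e P"
  unfolding urn_expect_def urn_prob_def sum.inter_filter[OF finite_kout_maps]
  by (intro sum.cong) auto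

lemma urn_prob_all_to:
  assumes "A \<subseteq> kout_positions n k" "j < n"
  shows "urn_prob n k \<alpha> e (\<lambda>M. \<forall>p\<in>A. M p = j) = urn_hit n \<alpha> e (card A)"
proof -
  have "(\<Prod>i<n. gen_pochhammer \<alpha> e (card {p\<in>A. j = i}))
      = (\<Prod>i<n. if i = j then gen_pochhammer \<alpha> e (card A) else 1)"
    by (intro prod.cong) auto
  also have "\<dots> = gen_pochhammer \<alpha> e (card A)"
    using assms(2) by simp
  finally have "(\<Prod>i<n. gen_pochhammer \<alpha> e (card {p\<in>A. j = i})) = gen_pochhammer \<alpha> e (card A)" .
  then show ?thesis
    using urn_weight_marginal[OF assms(1), of "\<lambda>_. j"] assms(2)
    by (simp add: urn_prob_def urn_prefix_weight_def urn_hit_def)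
qed

lemma urn_prob_all_to_two:
  assumes A: "A \<subseteq> kout_positions n k" and B: "B \<subseteq> kout_positions n k" and AB: "A \<inter> B = {}"
    and j: "j < n" "j' < n" "j \<noteq> j'"
  shows "urn_prob n k \<alpha> e (\<lambda>M. (\<forall>p\<in>A. M p = j) \<and> (\<forall>p\<in>B. M p = j'))
       = gen_pochhammer \<alpha> e (card A) * gen_pochhammer \<alpha> e (card B)
           / gen_pochhammer (\<alpha> * real n) e (card A + card B)"
proof -
  define g where "g p = (if p \<in> A then j else j')" for p
  have finAB: "finite A" "finite B"
    using A B by (auto intro: finite_subset)
  have event: "{M\<in>kout_maps n k. (\<forall>p\<in>A. M p = j) \<and> (\<forall>p\<in>B. M p = j')}
      = {M\<in>kout_maps n k. \<forall>p\<in>A \<union> B. M p = g p}"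
    using AB by (auto simp: g_def)
  have fiber: "{p\<in>A \<union> B. g p = i} = (if i = j then A else if i = j' then B else {})" for i
    using AB j by (auto simp: g_def)
  then have "(\<Prod>i<n. gen_pochhammer \<alpha> e (card {p\<in>A \<union> B. g p = i}))
      = (\<Prod>i\<in>{j, j'}. gen_pochhammer \<alpha> e (card {p\<in>A \<union> B. g p = i}))"
    using j by (intro prod.mono_neutral_right) auto
  also have "\<dots> = gen_pochhammer \<alpha> e (card A) * gen_pochhammer \<alpha> e (card B)"
    using j by (simp only: fiber) simp
  finally have numerator: "(\<Prod>i<n. gen_pochhammer \<alpha> e (card {p\<in>A \<union> B. g p = i}))
      = gen_pochhammer \<alpha> e (card A) * gen_pochhammer \<alpha> e (card B)" .
  have "urn_prob n k \<alpha> e (\<lambda>M. (\<forall>p\<in>A. M p = j) \<and> (\<forall>p\<in>B. M p = j')) = urn_prefix_weight n \<alpha> e (A \<union> B) g"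
    unfolding urn_prob_def event using A B j by (intro urn_weight_marginal) (auto simp: g_def)
  also have "\<dots> = gen_pochhammer \<alpha> e (card A) * gen_pochhammer \<alpha> e (card B)
           / gen_pochhammer (\<alpha> * real n) e (card A + card B)"
    unfolding urn_prefix_weight_def numerator using finAB AB by (simp add: card_Un_disjoint)
  finally show ?thesis .
qed

lemma urn_prob_all_to_two_le:
  "gen_pochhammer \<alpha> e a * gen_pochhammer \<alpha> e b / gen_pochhammer (\<alpha> * real n) e (a + b)
     \<le> urn_hit n \<alpha> e a * urn_hit n \<alpha> e b"
proof -
  have "gen_pochhammer (\<alpha> * real n) e a * gen_pochhammer (\<alpha> * real n) e b
      \<le> gen_pochhammer (\<alpha> * real n) e (a + b)"
    using n_pos \<alpha>_pos e_nonneg by (intro gen_pochhammer_mult_le_add) auto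
  then have "gen_pochhammer \<alpha> e a * gen_pochhammer \<alpha> e b / gen_pochhammer (\<alpha> * real n) e (a + b)
      \<le> gen_pochhammer \<alpha> e a * gen_pochhammer \<alpha> e b
          / (gen_pochhammer (\<alpha> * real n) e a * gen_pochhammer (\<alpha> * real n) e b)"
    using gen_pochhammer_scaled_pos gen_pochhammer_pos[OF \<alpha>_pos e_nonneg]
    by (intro divide_left_mono mult_pos_pos mult_nonneg_nonneg) (auto simp: less_imp_le)
  then show ?thesis
    by (simp add: urn_hit_def)
qed

lemma urn_cov_all_to_le:
  assumes A: "A \<subseteq> kout_positions n k" and B: "B \<subseteq> kout_positions n k" and j: "j < n" "j' < n"
  shows "urn_expect n k \<alpha> e (\<lambda>M. of_bool (\<forall>p\<in>A. M p = j) * of_bool (\<forall>p\<in>B. M p = j'))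
         - urn_expect n k \<alpha> e (\<lambda>M. of_bool (\<forall>p\<in>A. M p = j)) * urn_expect n k \<alpha> e (\<lambda>M. of_bool (\<forall>p\<in>B. M p = j'))
       \<le> (if j = j' then urn_hit n \<alpha> e (card (A \<union> B)) else 0)"
proof -
  have joint: "urn_expect n k \<alpha> e (\<lambda>M. of_bool (\<forall>p\<in>A. M p = j) * of_bool (\<forall>p\<in>B. M p = j'))
      = urn_prob n k \<alpha> e (\<lambda>M. (\<forall>p\<in>A. M p = j) \<and> (\<forall>p\<in>B. M p = j'))"
    by (simp add: urn_expect_of_bool flip: of_bool_conj)
  have marg: "urn_expect n k \<alpha> e (\<lambda>M. of_bool (\<forall>p\<in>A. M p = j)) = urn_hit n \<alpha> e (card A)"
    "urn_expect n k \<alpha> e (\<lambda>M. of_bool (\<forall>p\<in>B. M p = j')) = urn_hit n \<alpha> e (card B)"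
    using A B j by (simp_all add: urn_expect_of_bool urn_prob_all_to)
  have prod_nonneg: "urn_hit n \<alpha> e (card A) * urn_hit n \<alpha> e (card B) \<ge> 0"
    using urn_hit_nonneg by simp
  consider "j = j'" | "j \<noteq> j'" "A \<inter> B = {}" | "j \<noteq> j'" "A \<inter> B \<noteq> {}"
    by blast
  then show ?thesis
  proof cases
    case 1
    then have "urn_prob n k \<alpha> e (\<lambda>M. (\<forall>p\<in>A. M p = j) \<and> (\<forall>p\<in>B. M p = j'))
        = urn_hit n \<alpha> e (card (A \<union> B))"
      using urn_prob_all_to[of "A \<union> B" j] A B j by (simp add: ball_Un)
    then show ?thesis using 1 joint marg prod_nonneg by simp
  next
    case 2
    then show ?thesis
      using joint marg urn_prob_all_to_two[OF A B] j urn_prob_all_to_two_le by simp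
  next
    case 3
    then have empty: "{M\<in>kout_maps n k. (\<forall>p\<in>A. M p = j) \<and> (\<forall>p\<in>B. M p = j')} = {}"
      by auto
    have "urn_prob n k \<alpha> e (\<lambda>M. (\<forall>p\<in>A. M p = j) \<and> (\<forall>p\<in>B. M p = j')) = 0"
      unfolding urn_prob_def empty by simp
    then show ?thesis using 3 joint marg prod_nonneg by simp
  qed
qed

lemma urn_expect_sum: "urn_expect n k \<alpha> e (\<lambda>M. \<Sum>i\<in>I. X i M) = (\<Sum>i\<in>I. urn_expect n k \<alpha> e (X i))"
  by (simp add: urn_expect_def sum_distrib_left sum.swap[of _ "kout_maps n k"])

lemma urn_expect_indeg_power:
  assumes "j < n"
  shows "urn_expect n k \<alpha> e (\<lambda>M. real (indeg n k M j) ^ s)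
       = (\<Sum>w\<in>words (kout_positions n k) s. urn_hit n \<alpha> e (card (set w)))"
  unfolding real_indeg_power urn_expect_sum urn_expect_of_bool
  using assms by (intro sum.cong refl urn_prob_all_to) (auto simp: words_def)

text \<open>This is the only place where \<open>\<alpha>\<close> bounded away from 0 is needed: each of the \<open>u\<close> factors
\<open>(\<alpha> + e i)/(\<alpha> n + e i)\<close> is then \<open>O(1/n)\<close>.\<close>

lemma urn_hit_le:
  assumes c: "c > 0" "c \<le> \<alpha>" and e1: "e \<le> 1" and um: "u \<le> m"
  shows "urn_hit n \<alpha> e u \<le> (1 + real m / c) ^ m * (1 / real n) ^ u"
proof -
  define K where "K = 1 + real m / c"
  have K1: "K \<ge> 1" using c by (simp add: K_def)
  have factor_le: "(\<alpha> + e * real i) / (\<alpha> * real n + e * real i) \<le> K / real n" if "i < u" for i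
  proof -
    have "e * real i \<le> real m"
      using e1 e_nonneg that um mult_right_mono[OF e1, of "real i"] by linarith
    then have "e * real i / \<alpha> \<le> real m / c"
      using \<alpha>_pos c e_nonneg by (intro frac_le) auto
    have "(\<alpha> + e * real i) / (\<alpha> * real n + e * real i) \<le> (\<alpha> + e * real i) / (\<alpha> * real n)"
      using \<alpha>_pos n_pos e_nonneg by (intro divide_left_mono) (auto intro!: mult_pos_pos add_pos_nonneg)
    also have "\<dots> = (1 + e * real i / \<alpha>) / real n"
      using \<alpha>_pos n_pos by (simp add: field_simps)
    also have "\<dots> \<le> K / real n"
      using \<open>e * real i / \<alpha> \<le> real m / c\<close> n_pos by (intro divide_right_mono) (auto simp: K_def)
    finally show ?thesis .
  qed
  have "urn_hit n \<alpha> e u = (\<Prod>i<u. (\<alpha> + e * real i) / (\<alpha> * real n + e * real i))"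
    by (simp add: urn_hit_def gen_pochhammer_def prod_dividef)
  also have "\<dots> \<le> (\<Prod>i<u. K / real n)"
    using factor_le \<alpha>_pos n_pos e_nonneg by (intro prod_mono) (auto intro!: divide_nonneg_nonneg)
  also have "\<dots> \<le> K ^ m * (1 / real n) ^ u"
    using K1 um by (simp add: power_divide divide_right_mono power_increasing)
  finally show ?thesis by (simp add: K_def)
qed

lemma urn_variance_indeg_power_sum_le:
  assumes c: "c > 0" "c \<le> \<alpha>" and e1: "e \<le> 1"
  shows "urn_expect n k \<alpha> e (\<lambda>M. (indeg_power_sum n k s M - urn_expect n k \<alpha> e (indeg_power_sum n k s))\<^sup>2)
       \<le> real n * ((1 + real (2 * s) / c) ^ (2 * s) * (real k + real (2 * s)) ^ (2 * s))"
proof -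
  let ?W = "words (kout_positions n k) s"
  define I where "I = {..<n} \<times> ?W"
  define Y where "Y i M = (of_bool (\<forall>p\<in>set (snd i). M p = fst i) :: real)"
    for i and M :: "nat \<times> nat \<Rightarrow> nat"
  define K where "K = (1 + real (2 * s) / c) ^ (2 * s)"
  define H where "H w w' = K * (1 / real n) ^ card (set w \<union> set w')" for w w' :: "(nat \<times> nat) list"
  have sum_eq: "indeg_power_sum n k s M = (\<Sum>i\<in>I. Y i M)" for M
    by (simp add: indeg_power_sum_def real_indeg_power I_def Y_def sum.cartesian_product')
  have "urn_expect n k \<alpha> e (\<lambda>M. (indeg_power_sum n k s M - urn_expect n k \<alpha> e (indeg_power_sum n k s))\<^sup>2)
      = (\<Sum>i\<in>I. \<Sum>i'\<in>I. urn_expect n k \<alpha> e (\<lambda>M. Y i M * Y i' M) - urn_expect n k \<alpha> e (Y i) * urn_expect n k \<alpha> e (Y i'))"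
    unfolding urn_expect_def sum_eq by (rule weighted_variance_of_sum[OF finite_kout_maps sum_urn_weight])
  also have "\<dots> \<le> (\<Sum>i\<in>I. \<Sum>i'\<in>I. if fst i = fst i' then H (snd i) (snd i') else 0)"
  proof (intro sum_mono)
    fix i i' assume "i \<in> I" "i' \<in> I"
    then have pos: "set (snd i) \<subseteq> kout_positions n k" "set (snd i') \<subseteq> kout_positions n k"
        "fst i < n" "fst i' < n" and len: "length (snd i) = s" "length (snd i') = s"
      by (auto simp: I_def words_def)
    have "card (set (snd i) \<union> set (snd i')) \<le> length (snd i) + length (snd i')"
      by (meson card_Un_le card_length add_mono order.trans)
    then have "card (set (snd i) \<union> set (snd i')) \<le> 2 * s"
      using len by simp
    from urn_hit_le[OF c e1 this]
    have "urn_hit n \<alpha> e (card (set (snd i) \<union> set (snd i'))) \<le> H (snd i) (snd i')"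
      by (simp only: H_def K_def)
    then show "urn_expect n k \<alpha> e (\<lambda>M. Y i M * Y i' M) - urn_expect n k \<alpha> e (Y i) * urn_expect n k \<alpha> e (Y i')
        \<le> (if fst i = fst i' then H (snd i) (snd i') else 0)"
      using urn_cov_all_to_le[OF pos] unfolding Y_def by (auto split: if_splits)
  qed
  also have "\<dots> = real n * (\<Sum>w\<in>?W. \<Sum>w'\<in>?W. H w w')"
    unfolding I_def by (simp add: sum_pairs_same_first)
  also have "\<dots> \<le> real n * (K * (real k + real (2 * s)) ^ (2 * s))"
    using sum_pairs_of_kout_words_le[OF n_pos] c
    unfolding H_def sum_distrib_left[symmetric] by (intro mult_left_mono) (auto simp: K_def)
  finally show ?thesis by (simp add: K_def)
qed

theorem urn_indeg_power_sum_concentration: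
  assumes c: "c > 0" "c \<le> \<alpha>" and e1: "e \<le> 1" and T: "T > 0"
  shows "1 - real n * ((1 + real (2 * s) / c) ^ (2 * s) * (real k + real (2 * s)) ^ (2 * s)) / T\<^sup>2
       \<le> urn_prob n k \<alpha> e (\<lambda>M. \<bar>indeg_power_sum n k s M
             - urn_expect n k \<alpha> e (\<lambda>M. real (indeg n k M 0) ^ s) * real n\<bar> < T)"
proof -
  let ?X = "indeg_power_sum n k s"
  let ?Var = "urn_expect n k \<alpha> e (\<lambda>M. (?X M - urn_expect n k \<alpha> e ?X)\<^sup>2)"
  have "urn_expect n k \<alpha> e ?X = (\<Sum>j<n. urn_expect n k \<alpha> e (\<lambda>M. real (indeg n k M j) ^ s))"
    unfolding indeg_power_sum_def by (rule urn_expect_sum)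
  also have "\<dots> = urn_expect n k \<alpha> e (\<lambda>M. real (indeg n k M 0) ^ s) * real n"
    using n_pos by (simp add: urn_expect_indeg_power)
  finally have mean: "urn_expect n k \<alpha> e ?X = urn_expect n k \<alpha> e (\<lambda>M. real (indeg n k M 0) ^ s) * real n" .
  have "1 - ?Var / T\<^sup>2 \<le> urn_prob n k \<alpha> e (\<lambda>M. \<bar>?X M - urn_expect n k \<alpha> e ?X\<bar> < T)"
    unfolding urn_expect_def urn_prob_def
    by (rule chebyshev_weighted_sum[OF finite_kout_maps urn_weight_nonneg sum_urn_weight T])
  moreover have "?Var / T\<^sup>2
      \<le> real n * ((1 + real (2 * s) / c) ^ (2 * s) * (real k + real (2 * s)) ^ (2 * s)) / T\<^sup>2"
    using urn_variance_indeg_power_sum_le[OF c e1] by (simp add: divide_right_mono)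
  ultimately show ?thesis
    unfolding mean by linarith
qed
end

lemma prob_alpha_eq_urn_prob: "prob_alpha \<alpha> n k P = urn_prob n k \<alpha> 1 P"
  by (simp add: prob_alpha_def urn_prob_def kout_weight_eq_urn_weight)

lemma mu_alpha_eq_urn_expect:
  "mu_alpha \<alpha> n k s = urn_expect n k \<alpha> 1 (\<lambda>M. real (indeg n k M 0) ^ s)"
  by (simp add: mu_alpha_def urn_expect_def kout_weight_eq_urn_weight)

lemma prob_unif_kout_eq_urn_prob:
  "measure_pmf.prob (unif_kout n k) {M. P M} = urn_prob n k 1 0 P"
  unfolding unif_kout_def measure_pmf_of_set[OF kout_maps_nonempty finite_kout_maps]
  by (simp add: urn_prob_def urn_weight_uniform Int_def conj_commute)

lemma mu_inf_eq_urn_expect: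
  "mu_inf n k s = urn_expect n k 1 0 (\<lambda>M. real (indeg n k M 0) ^ s)"
  unfolding mu_inf_def unif_kout_def integral_pmf_of_set[OF kout_maps_nonempty finite_kout_maps]
  by (simp add: urn_expect_def urn_weight_uniform sum_divide_distrib)

lemma prob_alpha_le_1: "n > 0 \<Longrightarrow> \<alpha> > 0 \<Longrightarrow> prob_alpha \<alpha> n k P \<le> 1"
  unfolding prob_alpha_eq_urn_prob by (intro kout_urn.urn_prob_le_1, unfold_locales) auto

lemma prob_alpha_power_sum_concentration:
  assumes "n > 0" "c > 0" "c \<le> \<alpha>" "T > 0"
  shows "1 - real n * ((1 + real (2 * s) / c) ^ (2 * s) * (real k + real (2 * s)) ^ (2 * s)) / T\<^sup>2
       \<le> prob_alpha \<alpha> n k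
           (\<lambda>M. \<bar>(\<Sum>j<n. real (indeg n k M j) ^ s) - mu_alpha \<alpha> n k s * real n\<bar> < T)"
proof -
  interpret kout_urn n k \<alpha> 1
    using assms by unfold_locales auto
  show ?thesis
    using urn_indeg_power_sum_concentration[OF assms(2,3) _ assms(4)]
    by (simp add: prob_alpha_eq_urn_prob mu_alpha_eq_urn_expect indeg_power_sum_def)
qed

lemma prob_unif_kout_power_sum_concentration:
  assumes "n > 0" "T > 0"
  shows "1 - real n * ((1 + real (2 * s)) ^ (2 * s) * (real k + real (2 * s)) ^ (2 * s)) / T\<^sup>2
       \<le> measure_pmf.prob (unif_kout n k)
           {M. \<bar>(\<Sum>j<n. real (indeg n k M j) ^ s) - mu_inf n k s * real n\<bar> < T}"
proof -
  interpret kout_urn n k 1 0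
    using assms by unfold_locales auto
  show ?thesis
    using urn_indeg_power_sum_concentration[of 1 T s] assms(2)
    by (simp add: prob_unif_kout_eq_urn_prob mu_inf_eq_urn_expect indeg_power_sum_def)
qed

lemma tendsto_1_by_chebyshev:
  fixes f \<omega> :: "nat \<Rightarrow> real" and C :: real
  assumes \<omega>: "filterlim \<omega> at_top sequentially"
    and bounds: "\<And>n. n > 0 \<Longrightarrow> \<omega> n > 0 \<Longrightarrow>
                   1 - real n * C / (\<omega> n * sqrt (real n))\<^sup>2 \<le> f n \<and> f n \<le> 1"
  shows "f \<longlonglongrightarrow> 1"
proof -
  have "filterlim (\<lambda>n. (\<omega> n)\<^sup>2) at_infinity sequentially"
    using filterlim_at_top_mult_at_top[OF \<omega> \<omega>] at_top_le_at_infinity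
    unfolding power2_eq_square by (rule filterlim_mono) auto
  then have "(\<lambda>n. C / (\<omega> n)\<^sup>2) \<longlonglongrightarrow> 0"
    by (intro tendsto_divide_0[of _ C]) auto
  then have lower: "(\<lambda>n. 1 - C / (\<omega> n)\<^sup>2) \<longlonglongrightarrow> 1"
    using tendsto_diff[of "\<lambda>_. 1" 1 sequentially] by force
  have "eventually (\<lambda>n. n > 0 \<and> \<omega> n > 0) sequentially"
    using eventually_gt_at_top[of 0] \<omega>[unfolded filterlim_at_top_dense] by (auto intro: eventually_conj)
  then have "eventually (\<lambda>n. 1 - C / (\<omega> n)\<^sup>2 \<le> f n \<and> f n \<le> 1) sequentially"
    by (rule eventually_mono) (use bounds in \<open>auto simp: power_mult_distrib\<close>)
  then show ?thesis
    by (intro tendsto_sandwich[OF _ _ lower tendsto_const]) (auto elim: eventually_mono)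
qed

theorem corollary2:
  fixes k s :: nat and \<omega> :: "nat \<Rightarrow> real"
  assumes "filterlim \<omega> at_top sequentially"
  shows "(\<forall>\<alpha> :: nat \<Rightarrow> real. (\<forall>n. \<alpha> n > 0) \<and> (\<exists>c>0. \<forall>n. \<alpha> n \<ge> c) \<longrightarrow>
            ((\<lambda>n. prob_alpha (\<alpha> n) n k
               (\<lambda>M. \<bar>(\<Sum>j<n. real (indeg n k M j) ^ s) - mu_alpha (\<alpha> n) n k s * real n\<bar>
                      < \<omega> n * sqrt (real n)))
             \<longlonglongrightarrow> 1))
       \<and> ((\<lambda>n. measure_pmf.prob (unif_kout n k)
               {M. \<bar>(\<Sum>j<n. real (indeg n k M j) ^ s) - mu_inf n k s * real n\<bar>
                      < \<omega> n * sqrt (real n)})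
             \<longlonglongrightarrow> 1)"
proof (intro conjI allI impI)
  fix \<alpha> :: "nat \<Rightarrow> real"
  assume "(\<forall>n. \<alpha> n > 0) \<and> (\<exists>c>0. \<forall>n. \<alpha> n \<ge> c)"
  then obtain c where \<alpha>: "\<And>n. \<alpha> n > 0" "c > 0" "\<And>n. c \<le> \<alpha> n" by auto
  show "(\<lambda>n. prob_alpha (\<alpha> n) n k
          (\<lambda>M. \<bar>(\<Sum>j<n. real (indeg n k M j) ^ s) - mu_alpha (\<alpha> n) n k s * real n\<bar>
                 < \<omega> n * sqrt (real n))) \<longlonglongrightarrow> 1"
    by (intro tendsto_1_by_chebyshev[OF assms] conjI)
      (auto intro!: prob_alpha_power_sum_concentration[where c = c] prob_alpha_le_1 simp: \<alpha>)
qed (intro tendsto_1_by_chebyshev[OF assms] conjI,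
     auto intro!: prob_unif_kout_power_sum_concentration measure_pmf.prob_le_1)

end
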